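(* Assume $\widetilde p_i\propto i^{-\beta}$ for a constant $\beta>1$, $M=\omega_K(1)$, and total training time $T\eqsim M^\beta$. Let $\alpha\in(0,1)$ and run GD with learning rate $\eta$ satisfying $\eta p_1\lesssim1$ from $\mathbf{W}_0=\mathbf{0}$. Then $$\mathcal{L}^{\mathrm{GD}}(T)-\mathcal{L}^*\gtrsim\frac{\log K}{T^{1-1/\beta}}.$$
   Context: Setup: $K=MC$ items in $M$ groups of $C$ items (group $i$: indices $(i-1)C+1,\dots,iC$); $\widetilde p_1>\dots>\widetilde p_M>0$, $\sum_i\widetilde p_i=1$, $p_j=\widetilde p_i/C$ for $j$ in group $i$. $\mathbf{E},\widetilde{\mathbf{E}}\in\mathbb{R}^{K\times K}$ have orthonormal columns. Noise: $p_{i\mid j}=1-\alpha+\alpha/K$ if $i=j$, $\alpha/K$ otherwise. $\widehat p_{i\mid j}(\mathbf{W})=\exp(\widetilde{\mathbf{E}}_i^\top\mathbf{W}\mathbf{E}_j)/\sum_k\exp(\widetilde{\mathbf{E}}_k^\top\mathbf{W}\mathbf{E}_j)$; $\mathcal{L}(\mathbf{W})=-\sum_jp_j\sum_ip_{i\mid j}\log\widehat p_{i\mid j}(\mathbf{W})$, with minimal value $\mathcal{L}^*=-\big(1-\alpha+\tfrac{\alpha}{K}\big)\log\big(1-\alpha+\tfrac{\alpha}{K}\big)-\tfrac{\alpha(K-1)}{K}\log\tfrac{\alpha}{K}$. GD: $\mathbf{W}_{t+1}=\mathbf{W}_t-\eta\nabla\mathcal{L}(\mathbf{W}_t)$, $\mathcal{L}^{\mathrm{GD}}(T)=\mathcal{L}(\mathbf{W}_T)$.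 Regime $K\gg1$, $M\ll C$; $\omega_K(1)$ denotes a quantity tending to infinity as $K\to\infty$; $\eqsim,\lesssim,\gtrsim$ hide constant factors. *)

theory Defs
  imports "HOL-Analysis.Analysis"
begin

(* Conventions: items are indexed 0..K-1 (K = M*C); item j lies in group j div C
   (0-indexed groups 0..M-1). Matrices are functions nat => nat => real, only the
   entries with indices < K matter. *)

definition ptil :: "real \<Rightarrow> nat \<Rightarrow> nat \<Rightarrow> real" where
  "ptil \<beta> M i = real (i+1) powr (-\<beta>) / (\<Sum>k<M. real (k+1) powr (-\<beta>))"

definition pitem :: "real \<Rightarrow> nat \<Rightarrow> nat \<Rightarrow> nat \<Rightarrow> real" where
  "pitem \<beta> M C j = ptil \<beta> M (j div C) / real C"

definition pcond :: "real \<Rightarrow> nat \<Rightarrow> nat \<Rightarrow> nat \<Rightarrow> real" where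
  "pcond \<alpha> K i j = (if i = j then 1 - \<alpha> + \<alpha> / real K else \<alpha> / real K)"

definition orthonormal_cols :: "nat \<Rightarrow> (nat \<Rightarrow> nat \<Rightarrow> real) \<Rightarrow> bool" where
  "orthonormal_cols K E \<longleftrightarrow>
     (\<forall>i<K. \<forall>j<K. (\<Sum>k<K. E k i * E k j) = (if i = j then 1 else 0))"

definition logit :: "nat \<Rightarrow> (nat \<Rightarrow> nat \<Rightarrow> real) \<Rightarrow> (nat \<Rightarrow> nat \<Rightarrow> real)
    \<Rightarrow> (nat \<Rightarrow> nat \<Rightarrow> real) \<Rightarrow> nat \<Rightarrow> nat \<Rightarrow> real" where
  "logit K E Et W i j = (\<Sum>a<K. \<Sum>b<K. Et a i * W a b * E b j)"

definition phat :: "nat \<Rightarrow> (nat \<Rightarrow> nat \<Rightarrow> real) \<Rightarrow> (nat \<Rightarrow> nat \<Rightarrow> real)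
    \<Rightarrow> (nat \<Rightarrow> nat \<Rightarrow> real) \<Rightarrow> nat \<Rightarrow> nat \<Rightarrow> real" where
  "phat K E Et W i j = exp (logit K E Et W i j) / (\<Sum>k<K. exp (logit K E Et W k j))"

definition loss :: "real \<Rightarrow> nat \<Rightarrow> nat \<Rightarrow> real \<Rightarrow> (nat \<Rightarrow> nat \<Rightarrow> real)
    \<Rightarrow> (nat \<Rightarrow> nat \<Rightarrow> real) \<Rightarrow> (nat \<Rightarrow> nat \<Rightarrow> real) \<Rightarrow> real" where
  "loss \<beta> M C \<alpha> E Et W =
     - (\<Sum>j<M*C. pitem \<beta> M C j * (\<Sum>i<M*C. pcond \<alpha> (M*C) i j * ln (phat (M*C) E Et W i j)))"

definition Lstar :: "real \<Rightarrow> nat \<Rightarrow> real" where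
  "Lstar \<alpha> K = - (1 - \<alpha> + \<alpha> / real K) * ln (1 - \<alpha> + \<alpha> / real K)
                 - \<alpha> * (real K - 1) / real K * ln (\<alpha> / real K)"

definition grad :: "((nat \<Rightarrow> nat \<Rightarrow> real) \<Rightarrow> real) \<Rightarrow> (nat \<Rightarrow> nat \<Rightarrow> real) \<Rightarrow> nat \<Rightarrow> nat \<Rightarrow> real" where
  "grad L W a b = deriv (\<lambda>t. L (\<lambda>x y. W x y + (if x = a \<and> y = b then t else 0))) 0"

primrec gd :: "((nat \<Rightarrow> nat \<Rightarrow> real) \<Rightarrow> real) \<Rightarrow> real \<Rightarrow> (nat \<Rightarrow> nat \<Rightarrow> real) \<Rightarrow> nat
    \<Rightarrow> nat \<Rightarrow> nat \<Rightarrow> real" where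
  "gd L \<eta> W0 0 = W0"
| "gd L \<eta> W0 (Suc t) = (\<lambda>a b. gd L \<eta> W0 t a b - \<eta> * grad L (gd L \<eta> W0 t) a b)"

end

theory Submission
  imports Defs
begin

text \<open>
  For orthonormal \<open>E\<close>, \<open>Et\<close> the logits \<open>Z = Et\<^sup>T W E\<close> follow gradient descent on the
  softmax cross entropy in the coordinates \<open>Z\<close> themselves, column by column: \<open>Z i j\<close> moves
  by \<open>-\<eta> p j (phat i j - pcond i j)\<close>. Hence after \<open>T\<close> steps the margin of the correct logit
  in column \<open>j\<close> is at most \<open>2 \<eta> p j T\<close>, so \<open>phat j j \<le> exp (2 \<eta> p j T) / (K - 1)\<close>, and the
  KL divergence of column \<open>j\<close> is at least \<open>(1 - \<alpha>) ln K / 2\<close> as long as \<open>\<eta> p j T\<close> is bounded.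
  Under the power law with \<open>\<eta> p 0 \<lesssim> 1\<close> and \<open>T \<approx> M\<^sup>\<beta>\<close> this holds for all groups beyond
  \<open>M / 2\<close>, which carry mass \<open>\<greatersim> M powr (1 - \<beta>) \<approx> T powr (1/\<beta> - 1)\<close>.
\<close>

section \<open>Gradient descent on the softmax cross entropy\<close>

definition cross_entropy :: "nat \<Rightarrow> (nat \<Rightarrow> real) \<Rightarrow> (nat \<Rightarrow> nat \<Rightarrow> real) \<Rightarrow> (nat \<Rightarrow> nat \<Rightarrow> real)
    \<Rightarrow> (nat \<Rightarrow> nat \<Rightarrow> real) \<Rightarrow> (nat \<Rightarrow> nat \<Rightarrow> real) \<Rightarrow> real" where
  "cross_entropy K pj pc E Et W = - (\<Sum>j<K. pj j * (\<Sum>i<K. pc i j * ln (phat K E Et W i j)))"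

lemma loss_eq_cross_entropy:
  "loss \<beta> M C \<alpha> E Et = cross_entropy (M*C) (pitem \<beta> M C) (pcond \<alpha> (M*C)) E Et"
  unfolding loss_def cross_entropy_def by (rule ext) simp

lemma logit_add_entry:
  assumes "a < K" "b < K"
  shows "logit K E Et (\<lambda>x y. W x y + (if x = a \<and> y = b then t else 0)) i j
       = logit K E Et W i j + t * (Et a i * E b j)"
proof -
  have "(if x = a \<and> y = b then t else 0) = (if y = b then if x = a then t else 0 else 0)" for x y
    by simp
  then have "(\<Sum>x<K. \<Sum>y<K. Et x i * (if x = a \<and> y = b then t else 0) * E y j) = Et a i * t * E b j"
    using assms by (simp add: mult_delta_left mult_delta_right sum.delta cong: if_cong)
  then show ?thesis
    unfolding logit_def by (simp add: algebra_simps sum.distrib)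
qed

lemma sum_exp_logit_pos: "K > 0 \<Longrightarrow> (\<Sum>k<K. exp (logit K E Et W k j)) > 0"
  by (intro sum_pos) auto

lemma ln_phat:
  assumes "K > 0"
  shows "ln (phat K E Et W i j) = logit K E Et W i j - ln (\<Sum>k<K. exp (logit K E Et W k j))"
  unfolding phat_def using sum_exp_logit_pos[OF assms, of E Et W j] by (simp add: ln_div)

lemma phat_pos: "K > 0 \<Longrightarrow> phat K E Et W i j > 0"
  unfolding phat_def by (simp add: sum_exp_logit_pos)

lemma phat_le_1: "i < K \<Longrightarrow> phat K E Et W i j \<le> 1"
  unfolding phat_def by (subst divide_le_eq_1_pos) (auto intro!: sum_pos member_le_sum)

lemma sum_phat:
  assumes "K > 0"
  shows "(\<Sum>i<K. phat K E Et W i j) = 1"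
  unfolding phat_def using sum_exp_logit_pos[OF assms, of E Et W j]
  by (simp add: sum_divide_distrib[symmetric])

lemma grad_cross_entropy:
  assumes K: "K > 0" and ab: "a < K" "b < K"
    and pc_sum: "\<And>j. j < K \<Longrightarrow> (\<Sum>i<K. pc i j) = 1"
  shows "grad (cross_entropy K pj pc E Et) W a b
     = (\<Sum>j<K. pj j * (\<Sum>i<K. (phat K E Et W i j - pc i j) * (Et a i * E b j)))"
proof -
  define Z where "Z i j = logit K E Et W i j" for i j
  define u where "u i j = Et a i * E b j" for i j
  define S where "S j = (\<Sum>k<K. exp (Z k j))" for j
  define A where "A j = (\<Sum>k<K. exp (Z k j) * u k j)" for j
  have "(\<lambda>t. cross_entropy K pj pc E Et (\<lambda>x y. W x y + (if x = a \<and> y = b then t else 0)))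
     = (\<lambda>t. - (\<Sum>j<K. pj j * (\<Sum>i<K. pc i j * (Z i j + t * u i j
            - ln (\<Sum>k<K. exp (Z k j + t * u k j))))))"
    by (auto simp: cross_entropy_def ln_phat[OF K] logit_add_entry[OF ab] Z_def u_def)
  moreover have S_pos: "(\<Sum>k<K. exp (Z k j + t * u k j)) > 0" for j t
    using K by (intro sum_pos) auto
  then have "((\<lambda>t. - (\<Sum>j<K. pj j * (\<Sum>i<K. pc i j * (Z i j + t * u i j
            - ln (\<Sum>k<K. exp (Z k j + t * u k j)))))) has_real_derivative
       - (\<Sum>j<K. pj j * (\<Sum>i<K. pc i j * (u i j - A j / S j)))) (at 0)"
    unfolding A_def S_def using S_pos[of _ 0] by (intro derivative_eq_intros) (auto simp: mult.commute)
  ultimately have "grad (cross_entropy K pj pc E Et) W a b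
      = (\<Sum>j<K. pj j * - (\<Sum>i<K. pc i j * (u i j - A j / S j)))"
    unfolding grad_def by (simp add: DERIV_imp_deriv sum_negf)
  also have "\<dots> = (\<Sum>j<K. pj j * (\<Sum>i<K. (phat K E Et W i j - pc i j) * u i j))"
  proof (rule sum.cong[OF refl])
    fix j assume "j \<in> {..<K}"
    have "(\<Sum>i<K. pc i j * (u i j - A j / S j))
        = (\<Sum>i<K. pc i j * u i j) - (\<Sum>i<K. pc i j) * (A j / S j)"
      by (simp add: right_diff_distrib sum_subtractf sum_distrib_right sum_divide_distrib)
    then have "(\<Sum>i<K. pc i j * (u i j - A j / S j)) = (\<Sum>i<K. pc i j * u i j) - A j / S j"
      using pc_sum \<open>j \<in> {..<K}\<close> by simp
    moreover have "(\<Sum>i<K. phat K E Et W i j * u i j) = A j / S j"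
      unfolding phat_def A_def S_def Z_def by (simp add: sum_divide_distrib)
    ultimately show "pj j * - (\<Sum>i<K. pc i j * (u i j - A j / S j))
        = pj j * (\<Sum>i<K. (phat K E Et W i j - pc i j) * u i j)"
      by (simp add: left_diff_distrib sum_subtractf)
  qed
  finally show ?thesis unfolding u_def .
qed

lemma sum_orthonormal_cols:
  assumes "orthonormal_cols K E" "j < K"
  shows "(\<Sum>b<K. E b j * (\<Sum>j'<K. c j' * E b j')) = c j"
proof -
  have "(\<Sum>b<K. E b j * (\<Sum>j'<K. c j' * E b j')) = (\<Sum>j'<K. c j' * (\<Sum>b<K. E b j' * E b j))"
    by (simp add: sum_distrib_left ac_simps) (rule sum.swap)
  also have "\<dots> = (\<Sum>j'<K. c j' * (if j' = j then 1 else 0))"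
    using assms unfolding orthonormal_cols_def by (intro sum.cong) auto
  also have "\<dots> = c j"
    using assms(2) by (simp add: if_distrib sum.delta cong: if_cong)
  finally show ?thesis .
qed

lemma logit_gd_step:
  assumes K: "K > 0" and E: "orthonormal_cols K E" and Et: "orthonormal_cols K Et"
    and pc_sum: "\<And>j. j < K \<Longrightarrow> (\<Sum>i<K. pc i j) = 1"
    and ij: "i < K" "j < K"
  shows "logit K E Et (\<lambda>a b. W a b - \<eta> * grad (cross_entropy K pj pc E Et) W a b) i j
       = logit K E Et W i j - \<eta> * (pj j * (phat K E Et W i j - pc i j))"
proof -
  define G where "G i j = pj j * (phat K E Et W i j - pc i j)" for i j
  have grad: "grad (cross_entropy K pj pc E Et) W a b = (\<Sum>j'<K. (\<Sum>i'<K. G i' j' * Et a i') * E b j')"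
    if "a < K" "b < K" for a b
    using grad_cross_entropy[OF K that pc_sum]
    by (simp add: G_def sum_distrib_left sum_distrib_right ac_simps)
  have "logit K E Et (\<lambda>a b. W a b - \<eta> * grad (cross_entropy K pj pc E Et) W a b) i j
      = (\<Sum>a<K. \<Sum>b<K. Et a i * W a b * E b j
          - \<eta> * (Et a i * (E b j * (\<Sum>j'<K. (\<Sum>i'<K. G i' j' * Et a i') * E b j'))))"
    unfolding logit_def by (intro sum.cong refl) (simp add: grad algebra_simps)
  also have "\<dots> = logit K E Et W i j
        - \<eta> * (\<Sum>a<K. Et a i * (\<Sum>b<K. E b j * (\<Sum>j'<K. (\<Sum>i'<K. G i' j' * Et a i') * E b j')))"
    unfolding logit_def by (simp add: sum_subtractf sum_distrib_left)
  also have "\<dots> = logit K E Et W i j - \<eta> * G i j"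
    by (simp add: sum_orthonormal_cols[OF E ij(2)] sum_orthonormal_cols[OF Et ij(1)])
  finally show ?thesis unfolding G_def .
qed

lemma gd_logit_margin_le:
  assumes K: "K > 0" and E: "orthonormal_cols K E" and Et: "orthonormal_cols K Et"
    and pc_sum: "\<And>j. j < K \<Longrightarrow> (\<Sum>i<K. pc i j) = 1"
    and pc: "\<And>i j. 0 \<le> pc i j \<and> pc i j \<le> 1"
    and ij: "i < K" "j < K" and \<eta>: "\<eta> \<ge> 0" and pj: "pj j \<ge> 0"
  shows "logit K E Et (gd (cross_entropy K pj pc E Et) \<eta> W\<^sub>0 t) j j
       - logit K E Et (gd (cross_entropy K pj pc E Et) \<eta> W\<^sub>0 t) i j
     \<le> logit K E Et W\<^sub>0 j j - logit K E Et W\<^sub>0 i j + 2 * \<eta> * pj j * real t"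
proof (induction t)
  case 0
  then show ?case by simp
next
  case (Suc t)
  define W where "W = gd (cross_entropy K pj pc E Et) \<eta> W\<^sub>0 t"
  have step: "logit K E Et (gd (cross_entropy K pj pc E Et) \<eta> W\<^sub>0 (Suc t)) i' j
      = logit K E Et W i' j - \<eta> * (pj j * (phat K E Et W i' j - pc i' j))" if "i' < K" for i'
    unfolding W_def gd.simps by (rule logit_gd_step[OF K E Et pc_sum that ij(2)])
  have "pc j j + phat K E Et W i j - phat K E Et W j j - pc i j \<le> 2"
    using pc[of j j] pc[of i j] phat_le_1[OF ij(1), of E Et W j] phat_pos[OF K, of E Et W j j] by linarith
  then have "\<eta> * pj j * (pc j j + phat K E Et W i j - phat K E Et W j j - pc i j) \<le> \<eta> * pj j * 2"
    using \<eta> pj by (intro mult_left_mono) auto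
  then show ?case using Suc.IH step[OF ij(1)] step[OF ij(2)] unfolding W_def[symmetric]
    by (simp add: algebra_simps)
qed

lemma phat_diag_le:
  assumes K: "K \<ge> 2" and j: "j < K"
    and margin: "\<And>i. i < K \<Longrightarrow> logit K E Et W j j - logit K E Et W i j \<le> D"
  shows "phat K E Et W j j \<le> exp D / (real K - 1)"
proof -
  define Z where "Z i = logit K E Et W i j" for i
  have "(\<Sum>k\<in>{..<K}-{j}. exp (Z j - D)) \<le> (\<Sum>k\<in>{..<K}-{j}. exp (Z k))"
    using margin unfolding Z_def by (intro sum_mono) (simp add: add.commute diff_le_eq)
  also have "\<dots> \<le> (\<Sum>k<K. exp (Z k))" by (intro sum_mono2) auto
  finally have "(real K - 1) * exp (Z j - D) \<le> (\<Sum>k<K. exp (Z k))"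
    using j K by (simp add: card_Diff_singleton of_nat_diff)
  moreover have "(real K - 1) * exp (Z j - D) > 0" using K by simp
  ultimately have "exp (Z j) / (\<Sum>k<K. exp (Z k)) \<le> exp (Z j) / ((real K - 1) * exp (Z j - D))"
    by (intro divide_left_mono) auto
  also have "\<dots> = exp D / (real K - 1)"
    using K by (simp add: exp_diff)
  finally show ?thesis unfolding phat_def Z_def .
qed

section \<open>Kullback-Leibler divergence\<close>

definition kl_div :: "nat \<Rightarrow> (nat \<Rightarrow> real) \<Rightarrow> (nat \<Rightarrow> real) \<Rightarrow> real" where
  "kl_div K p q = (\<Sum>i<K. p i * ln (p i)) - (\<Sum>i<K. p i * ln (q i))"

lemma mult_ln_diff_ge:
  fixes p q :: real
  assumes "p > 0" "q > 0"
  shows "p - q \<le> p * ln p - p * ln q"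
proof -
  have "p * ln (q / p) \<le> p * (q / p - 1)"
    using assms by (intro mult_left_mono ln_le_minus_one) auto
  then show ?thesis using assms by (simp add: ln_div algebra_simps)
qed

lemma kl_div_eq_sum: "kl_div K p q = (\<Sum>i<K. p i * ln (p i) - p i * ln (q i))"
  unfolding kl_div_def by (simp add: sum_subtractf)

lemma kl_div_nonneg:
  assumes "\<And>i. i < K \<Longrightarrow> p i > 0" "\<And>i. i < K \<Longrightarrow> q i > 0"
    "(\<Sum>i<K. p i) = 1" "(\<Sum>i<K. q i) = 1"
  shows "kl_div K p q \<ge> 0"
proof -
  have "(\<Sum>i<K. p i - q i) \<le> kl_div K p q"
    unfolding kl_div_eq_sum using assms by (intro sum_mono mult_ln_diff_ge) auto
  then show ?thesis using assms by (simp add: sum_subtractf)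
qed

lemma kl_div_ge_single:
  assumes p: "\<And>i. i < K \<Longrightarrow> p i > 0" and q: "\<And>i. i < K \<Longrightarrow> q i > 0"
    and q_sum: "(\<Sum>i<K. q i) = 1" and j: "j < K"
  shows "p j * ln (p j / q j) - 1 \<le> kl_div K p q"
proof -
  have "0 \<le> (\<Sum>i\<in>{..<K}-{j}. p i)"
    using p by (intro sum_nonneg) (auto intro: less_imp_le)
  moreover have "(\<Sum>i\<in>{..<K}-{j}. q i) \<le> (\<Sum>i<K. q i)"
    using q by (intro sum_mono2) (auto intro: less_imp_le)
  ultimately have "-1 \<le> (\<Sum>i\<in>{..<K}-{j}. p i) - (\<Sum>i\<in>{..<K}-{j}. q i)"
    using q_sum by linarith
  also have "\<dots> \<le> (\<Sum>i\<in>{..<K}-{j}. p i * ln (p i) - p i * ln (q i))"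
    unfolding sum_subtractf[symmetric] using p q by (intro sum_mono mult_ln_diff_ge) auto
  finally have "p j * ln (p j) - p j * ln (q j) - 1 \<le> kl_div K p q"
    unfolding kl_div_eq_sum using j by (simp add: sum.remove[of _ j])
  then show ?thesis
    using p[OF j] q[OF j] by (simp add: ln_div algebra_simps)
qed

section \<open>The noisy conditional distribution\<close>

lemma pcond_pos: "0 < \<alpha> \<Longrightarrow> \<alpha> < 1 \<Longrightarrow> K > 0 \<Longrightarrow> pcond \<alpha> K i j > 0"
  unfolding pcond_def by (auto intro!: add_pos_pos)

lemma pcond_le_1: "0 < \<alpha> \<Longrightarrow> \<alpha> < 1 \<Longrightarrow> K > 0 \<Longrightarrow> pcond \<alpha> K i j \<le> 1"
  unfolding pcond_def by (auto simp: divide_le_eq mult_le_cancel_left1)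

lemma sum_pcond_off_diag:
  assumes "j < K"
  shows "(\<Sum>i<K. f (pcond \<alpha> K i j)) = f (pcond \<alpha> K j j) + (real K - 1) * f (\<alpha> / real K)"
proof -
  have "(\<Sum>i\<in>{..<K}-{j}. f (pcond \<alpha> K i j)) = (\<Sum>i\<in>{..<K}-{j}. f (\<alpha> / real K))"
    by (intro sum.cong) (auto simp: pcond_def)
  then show ?thesis
    using assms by (simp add: sum.remove[of _ j] card_Diff_singleton of_nat_diff)
qed

lemma sum_pcond: "K > 0 \<Longrightarrow> j < K \<Longrightarrow> (\<Sum>i<K. pcond \<alpha> K i j) = 1"
  using sum_pcond_off_diag[of j K "\<lambda>x. x"] by (simp add: pcond_def field_simps)

lemma sum_pcond_ln_pcond:
  "K > 0 \<Longrightarrow> j < K \<Longrightarrow> (\<Sum>i<K. pcond \<alpha> K i j * ln (pcond \<alpha> K i j)) = - Lstar \<alpha> K"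
  using sum_pcond_off_diag[of j K "\<lambda>x. x * ln x"] by (simp add: pcond_def Lstar_def field_simps)

lemma cross_entropy_minus_Lstar:
  assumes K: "K > 0" and pj_sum: "(\<Sum>j<K. pj j) = 1"
  shows "cross_entropy K pj (pcond \<alpha> K) E Et W - Lstar \<alpha> K
      = (\<Sum>j<K. pj j * kl_div K (\<lambda>i. pcond \<alpha> K i j) (\<lambda>i. phat K E Et W i j))"
proof -
  have "Lstar \<alpha> K = (\<Sum>j<K. pj j * - (\<Sum>i<K. pcond \<alpha> K i j * ln (pcond \<alpha> K i j)))"
    using K pj_sum by (simp add: sum_pcond_ln_pcond sum_distrib_right[symmetric])
  then show ?thesis
    unfolding cross_entropy_def kl_div_def by (simp add: right_diff_distrib sum_subtractf sum_negf)
qed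

text \<open>The constant \<open>2 (1 / (1 - \<alpha>) + ln 2 - ln (1 - \<alpha>) + D)\<close> absorbs the \<open>-1\<close> of
  \<open>kl_div_ge_single\<close>, the passage from \<open>K - 1\<close> to \<open>K\<close>, and the factor \<open>exp D\<close>.\<close>

lemma kl_div_pcond_ge_half_ln:
  assumes K: "K \<ge> 2" and \<alpha>: "0 < \<alpha>" "\<alpha> < 1" and j: "j < K"
    and q: "\<And>i. i < K \<Longrightarrow> q i > 0" and q_sum: "(\<Sum>i<K. q i) = 1"
    and qj: "q j \<le> exp D / (real K - 1)"
    and ln_K: "2 * (1 / (1 - \<alpha>) + ln 2 - ln (1 - \<alpha>) + D) \<le> ln (real K)"
  shows "(1 - \<alpha>) / 2 * ln (real K) \<le> kl_div K (\<lambda>i. pcond \<alpha> K i j) q"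
proof -
  define p where "p = pcond \<alpha> K j j"
  define X where "X = (1 - \<alpha>) * (real K - 1) / exp D"
  have p: "p \<ge> 1 - \<alpha>" unfolding p_def pcond_def using \<alpha> by simp
  have K1: "real K - 1 > 0" using K by simp
  have "(1 - \<alpha>) / (exp D / (real K - 1)) \<le> p / q j"
    using p \<alpha> q[OF j] qj K1 by (intro frac_le) auto
  then have X_le: "X \<le> p / q j" unfolding X_def using K1 by (simp add: field_simps)
  have "ln (real K / 2) \<le> ln (real K - 1)" using K by (intro ln_mono) auto
  then have "ln X \<ge> ln (real K) - ln 2 + ln (1 - \<alpha>) - D"
    unfolding X_def using \<alpha> K1 by (simp add: ln_mult ln_div)
  then have ln_X: "ln X \<ge> ln (real K) / 2 + 1 / (1 - \<alpha>)"
    using ln_K by simp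
  have "X > 0" unfolding X_def using \<alpha> K1 by simp
  then have "ln X \<le> ln (p / q j)" using X_le by (intro ln_mono)
  moreover have "0 \<le> ln (real K)" "0 < 1 / (1 - \<alpha>)" using K \<alpha> by auto
  ultimately have "(1 - \<alpha>) * (ln (real K) / 2 + 1 / (1 - \<alpha>)) \<le> p * ln (p / q j)"
    using ln_X p \<alpha> by (intro mult_mono) auto
  moreover have "p * ln (p / q j) - 1 \<le> kl_div K (\<lambda>i. pcond \<alpha> K i j) q"
    unfolding p_def using \<alpha> K by (intro kl_div_ge_single q q_sum j pcond_pos) auto
  moreover have "(1 - \<alpha>) * (ln (real K) / 2 + 1 / (1 - \<alpha>)) = (1 - \<alpha>) / 2 * ln (real K) + 1"
    using \<alpha> by (simp add: field_simps)
  ultimately show ?thesis by linarith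
qed

section \<open>Excess loss of gradient descent\<close>

lemma gd_excess_loss_ge:
  assumes K: "K \<ge> 2" and E: "orthonormal_cols K E" and Et: "orthonormal_cols K Et"
    and \<alpha>: "0 < \<alpha>" "\<alpha> < 1" and \<eta>: "\<eta> \<ge> 0"
    and pj: "\<And>j. pj j \<ge> 0" and pj_sum: "(\<Sum>j<K. pj j) = 1"
    and S: "S \<subseteq> {..<K}" and slow: "\<And>j. j \<in> S \<Longrightarrow> 2 * \<eta> * pj j * real T \<le> D"
    and ln_K: "2 * (1 / (1 - \<alpha>) + ln 2 - ln (1 - \<alpha>) + D) \<le> ln (real K)"
  shows "(1 - \<alpha>) / 2 * ln (real K) * (\<Sum>j\<in>S. pj j)
     \<le> cross_entropy K pj (pcond \<alpha> K) E Et (gd (cross_entropy K pj (pcond \<alpha> K) E Et) \<eta> (\<lambda>_ _. 0) T)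
       - Lstar \<alpha> K"
proof -
  have K0: "K > 0" using K by simp
  define W where "W = gd (cross_entropy K pj (pcond \<alpha> K) E Et) \<eta> (\<lambda>_ _. 0) T"
  define kl where "kl j = kl_div K (\<lambda>i. pcond \<alpha> K i j) (\<lambda>i. phat K E Et W i j)" for j
  have kl_nonneg: "kl j \<ge> 0" if "j < K" for j
    unfolding kl_def using \<alpha> K0 that
    by (intro kl_div_nonneg) (auto simp: pcond_pos sum_pcond phat_pos sum_phat)
  have pc_sum: "(\<Sum>i<K. pcond \<alpha> K i j) = 1" if "j < K" for j
    using K0 that by (rule sum_pcond)
  have pc: "0 \<le> pcond \<alpha> K i j \<and> pcond \<alpha> K i j \<le> 1" for i j
    using \<alpha> K0 by (simp add: pcond_pos less_imp_le pcond_le_1)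
  have kl_ge: "(1 - \<alpha>) / 2 * ln (real K) \<le> kl j" if j: "j \<in> S" for j
  proof -
    have jK: "j < K" using S j by auto
    have "logit K E Et W j j - logit K E Et W i j \<le> D" if "i < K" for i
      using gd_logit_margin_le[where pj = pj and pc = "pcond \<alpha> K" and W\<^sub>0 = "\<lambda>_ _. 0" and t = T,
          OF K0 E Et pc_sum pc that jK \<eta> pj] slow[OF j]
      by (simp add: W_def logit_def)
    then have "phat K E Et W j j \<le> exp D / (real K - 1)"
      using jK by (intro phat_diag_le K)
    then show ?thesis
      unfolding kl_def using K0
      by (intro kl_div_pcond_ge_half_ln[OF K \<alpha> jK _ _ _ ln_K]) (auto simp: phat_pos sum_phat)
  qed
  have "(1 - \<alpha>) / 2 * ln (real K) * (\<Sum>j\<in>S. pj j) \<le> (\<Sum>j\<in>S. pj j * kl j)"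
    unfolding sum_distrib_left
    by (intro sum_mono) (metis kl_ge pj mult.commute mult_left_mono)
  also have "\<dots> \<le> (\<Sum>j<K. pj j * kl j)"
    using S pj kl_nonneg by (intro sum_mono2) auto
  also have "\<dots> = cross_entropy K pj (pcond \<alpha> K) E Et W - Lstar \<alpha> K"
    unfolding kl_def by (rule cross_entropy_minus_Lstar[OF K0 pj_sum, symmetric])
  finally show ?thesis unfolding W_def .
qed

section \<open>The power law\<close>

definition zeta_sum :: "real \<Rightarrow> real" where
  "zeta_sum \<beta> = (\<Sum>k. real (k+1) powr (-\<beta>))"

lemma summable_powr_plus_1: "\<beta> > 1 \<Longrightarrow> summable (\<lambda>k. real (k+1) powr (-\<beta>))"
  using summable_Suc_iff[of "\<lambda>n. real n powr (-\<beta>)"] by (simp add: summable_real_powr_iff)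

lemma sum_powr_le_zeta_sum: "\<beta> > 1 \<Longrightarrow> (\<Sum>k<M. real (k+1) powr (-\<beta>)) \<le> zeta_sum \<beta>"
  unfolding zeta_sum_def by (intro sum_le_suminf summable_powr_plus_1) auto

lemma zeta_sum_ge_1: "\<beta> > 1 \<Longrightarrow> zeta_sum \<beta> \<ge> 1"
  using sum_powr_le_zeta_sum[of \<beta> 1] by simp

lemma sum_lessThan_mult_div:
  fixes f :: "nat \<Rightarrow> 'a::comm_semiring_1"
  assumes "C > 0"
  shows "(\<Sum>j<M*C. f (j div C)) = of_nat C * (\<Sum>g<M. f g)"
proof -
  have "(\<Sum>j<M*C. f (j div C)) = (\<Sum>g<M. \<Sum>j\<in>{g*C..<g*C+C}. f (j div C))"
    by (rule sum.nat_group[symmetric])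
  also have "\<dots> = (\<Sum>g<M. \<Sum>j\<in>{g*C..<g*C+C}. f g)"
  proof (intro sum.cong refl)
    fix g j assume "j \<in> {g*C..<g*C+C}"
    then have "j div C = g" using assms
      by (metis atLeastLessThan_iff div_nat_eqI mult.commute add.commute mult_Suc_right)
    then show "f (j div C) = f g" by simp
  qed
  also have "\<dots> = of_nat C * (\<Sum>g<M. f g)" by (simp add: sum_distrib_left)
  finally show ?thesis .
qed

lemma pitem_eq:
  "pitem \<beta> M C j = real (j div C + 1) powr (-\<beta>) / ((\<Sum>k<M. real (k+1) powr (-\<beta>)) * real C)"
  unfolding pitem_def ptil_def by simp

lemma pitem_nonneg: "pitem \<beta> M C j \<ge> 0"
  unfolding pitem_eq by (simp add: sum_nonneg)

lemma sum_pitem: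
  assumes "M > 0" "C > 0"
  shows "(\<Sum>j<M*C. pitem \<beta> M C j) = 1"
proof -
  have "(\<Sum>k<M. real (k+1) powr (-\<beta>)) > 0" using assms by (intro sum_pos) auto
  then have "(\<Sum>g<M. ptil \<beta> M g) = 1"
    unfolding ptil_def by (simp add: sum_divide_distrib[symmetric])
  moreover have "(\<Sum>j<M*C. pitem \<beta> M C j) = real C * (\<Sum>g<M. ptil \<beta> M g / real C)"
    unfolding pitem_def by (rule sum_lessThan_mult_div[OF \<open>C > 0\<close>])
  ultimately show ?thesis
    using \<open>C > 0\<close> by (simp add: sum_divide_distrib[symmetric])
qed

lemma pitem_tail_le:
  assumes "\<beta> \<ge> 0" "M > 0" "M div 2 \<le> j div C"
  shows "pitem \<beta> M C j \<le> pitem \<beta> M C 0 * (real M / 2) powr (-\<beta>)"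
proof -
  have "real (j div C + 1) powr (-\<beta>) \<le> (real M / 2) powr (-\<beta>)"
    using assms by (intro powr_mono2') auto
  then show ?thesis
    unfolding pitem_eq by (simp add: divide_right_mono sum_nonneg)
qed

text \<open>The groups beyond \<open>M / 2\<close> each have probability at least \<open>M powr (-\<beta>) / zeta_sum \<beta>\<close>.\<close>

lemma pitem_tail_mass:
  assumes \<beta>: "\<beta> > 1" and "M > 0" "C > 0"
  shows "real M powr (1 - \<beta>) / (2 * zeta_sum \<beta>)
      \<le> (\<Sum>j\<in>{j. j < M*C \<and> M div 2 \<le> j div C}. pitem \<beta> M C j)"
proof -
  define S where "S = (\<Sum>k<M. real (k+1) powr (-\<beta>))"
  have "real (0+1) powr (-\<beta>) \<le> S"
    unfolding S_def using \<open>M > 0\<close> by (intro member_le_sum) auto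
  then have S: "1 \<le> S" "S \<le> zeta_sum \<beta>"
    using sum_powr_le_zeta_sum[OF \<beta>] by (auto simp: S_def)
  have pitem_S: "pitem \<beta> M C j = real (j div C + 1) powr (-\<beta>) / S / real C" for j
    unfolding pitem_eq S_def by simp
  have "real M / 2 * (real M powr (-\<beta>) / zeta_sum \<beta>)
      \<le> real (card {M div 2..<M}) * (real M powr (-\<beta>) / zeta_sum \<beta>)"
    using S by (intro mult_right_mono) auto
  also have "\<dots> = (\<Sum>g\<in>{M div 2..<M}. real M powr (-\<beta>) / zeta_sum \<beta>)" by simp
  also have "\<dots> \<le> (\<Sum>g\<in>{M div 2..<M}. real (g+1) powr (-\<beta>) / S)"
    using S \<beta> by (intro sum_mono frac_le powr_mono2') auto
  also have "\<dots> = (\<Sum>g<M. if M div 2 \<le> g then real (g+1) powr (-\<beta>) / S else 0)"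
    by (simp add: sum.If_cases Int_def atLeastLessThan_def conj_commute)
  also have "\<dots> = real C * (\<Sum>g<M. if M div 2 \<le> g then real (g+1) powr (-\<beta>) / S / real C else 0)"
    using \<open>C > 0\<close> by (simp add: sum_distrib_left if_distrib[where f = "\<lambda>x. real C * x"] cong: if_cong)
  also have "\<dots> = (\<Sum>j<M*C. if M div 2 \<le> j div C then pitem \<beta> M C j else 0)"
    unfolding pitem_S by (rule sum_lessThan_mult_div[OF \<open>C > 0\<close>, symmetric])
  also have "\<dots> = (\<Sum>j\<in>{j. j < M*C \<and> M div 2 \<le> j div C}. pitem \<beta> M C j)"
    by (simp add: sum.If_cases Int_def lessThan_def conj_commute)
  finally show ?thesis
    using \<open>M > 0\<close> by (simp add: powr_diff powr_minus_divide field_simps)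
qed

lemma power_law_gd_excess_loss_ge:
  assumes \<beta>: "\<beta> > 1" and \<alpha>: "0 < \<alpha>" "\<alpha> < 1" and M: "M \<ge> 2" and C: "C > 0"
    and E: "orthonormal_cols (M*C) E" and Et: "orthonormal_cols (M*C) Et"
    and \<eta>: "\<eta> > 0" "\<eta> * pitem \<beta> M C 0 \<le> c\<^sub>\<eta>" and T: "real T \<le> b * real M powr \<beta>"
    and ln_K: "2 * (1 / (1 - \<alpha>) + ln 2 - ln (1 - \<alpha>) + 2 * c\<^sub>\<eta> * b * 2 powr \<beta>) \<le> ln (real (M*C))"
  shows "(1 - \<alpha>) / (4 * zeta_sum \<beta>) * ln (real (M*C)) * real M powr (1 - \<beta>)
      \<le> loss \<beta> M C \<alpha> E Et (gd (loss \<beta> M C \<alpha> E Et) \<eta> (\<lambda>_ _. 0) T) - Lstar \<alpha> (M*C)"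
proof -
  define S where "S = {j. j < M*C \<and> M div 2 \<le> j div C}"
  have "M * 1 \<le> M * C" using C by (intro mult_le_mono2) simp
  then have K: "M * C \<ge> 2" using M by linarith
  have slow: "2 * \<eta> * pitem \<beta> M C j * real T \<le> 2 * c\<^sub>\<eta> * b * 2 powr \<beta>" if "j \<in> S" for j
  proof -
    have "pitem \<beta> M C j \<le> pitem \<beta> M C 0 * (real M / 2) powr (-\<beta>)"
      using that \<beta> M by (intro pitem_tail_le) (auto simp: S_def)
    then have "\<eta> * pitem \<beta> M C j * real T \<le> \<eta> * (pitem \<beta> M C 0 * (real M / 2) powr (-\<beta>)) * real T"
      using \<eta>(1) by (intro mult_right_mono mult_left_mono) auto
    also have "\<dots> \<le> c\<^sub>\<eta> * (real M / 2) powr (-\<beta>) * (b * real M powr \<beta>)"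
    proof (rule mult_mono)
      have "0 \<le> c\<^sub>\<eta>" using \<eta> pitem_nonneg[of \<beta> M C 0] by (smt (verit) zero_le_mult_iff)
      then show "0 \<le> c\<^sub>\<eta> * (real M / 2) powr (-\<beta>)" by simp
      show "\<eta> * (pitem \<beta> M C 0 * (real M / 2) powr (-\<beta>)) \<le> c\<^sub>\<eta> * (real M / 2) powr (-\<beta>)"
        unfolding mult.assoc[symmetric] using \<eta>(2) by (rule mult_right_mono) simp
    qed (use T in auto)
    also have "\<dots> = c\<^sub>\<eta> * b * 2 powr \<beta>"
      using M by (simp add: powr_divide powr_minus field_simps)
    finally show ?thesis by simp
  qed
  have "0 \<le> ln (real (M*C))" using K by (intro ln_ge_zero) linarith
  then have "(1 - \<alpha>) / (4 * zeta_sum \<beta>) * ln (real (M*C)) * real M powr (1 - \<beta>)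
      = (1 - \<alpha>) / 2 * ln (real (M*C)) * (real M powr (1 - \<beta>) / (2 * zeta_sum \<beta>))"
    by simp
  also have "\<dots> \<le> (1 - \<alpha>) / 2 * ln (real (M*C)) * (\<Sum>j\<in>S. pitem \<beta> M C j)"
    unfolding S_def using \<alpha> \<beta> M C \<open>0 \<le> ln (real (M*C))\<close>
    by (intro mult_left_mono pitem_tail_mass) auto
  also have "\<dots> \<le> loss \<beta> M C \<alpha> E Et (gd (loss \<beta> M C \<alpha> E Et) \<eta> (\<lambda>_ _. 0) T) - Lstar \<alpha> (M*C)"
    unfolding loss_eq_cross_entropy
    by (rule gd_excess_loss_ge[OF K E Et \<alpha> less_imp_le[OF \<eta>(1)] pitem_nonneg sum_pitem _ slow ln_K])
       (use M C in \<open>auto simp: S_def\<close>)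
  finally show ?thesis .
qed

lemma powr_ratio_le_of_mult_powr_le:
  fixes a x t \<beta> :: real
  assumes "\<beta> \<ge> 1" "a > 0" "x > 0" "a * x powr \<beta> \<le> t"
  shows "a powr (1 - 1/\<beta>) / t powr (1 - 1/\<beta>) \<le> x powr (1 - \<beta>)"
proof -
  have "a powr (1 - 1/\<beta>) * x powr (\<beta> - 1) = (a * x powr \<beta>) powr (1 - 1/\<beta>)"
    using assms by (simp add: powr_mult powr_powr algebra_simps)
  also have "\<dots> \<le> t powr (1 - 1/\<beta>)"
    using assms by (intro powr_mono2) auto
  finally show ?thesis
    using assms by (simp add: divide_le_eq powr_diff powr_minus_divide field_simps)
qed

lemma power_law_gd_excess_loss_ge_time:
  assumes \<beta>: "\<beta> > 1" and \<alpha>: "0 < \<alpha>" "\<alpha> < 1" and M: "M \<ge> 2" and C: "C > 0"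
    and E: "orthonormal_cols (M*C) E" and Et: "orthonormal_cols (M*C) Et"
    and \<eta>: "\<eta> > 0" "\<eta> * pitem \<beta> M C 0 \<le> c\<^sub>\<eta>"
    and T: "a > 0" "a * real M powr \<beta> \<le> real T" "real T \<le> b * real M powr \<beta>"
    and ln_K: "2 * (1 / (1 - \<alpha>) + ln 2 - ln (1 - \<alpha>) + 2 * c\<^sub>\<eta> * b * 2 powr \<beta>) \<le> ln (real (M*C))"
  shows "(1 - \<alpha>) * a powr (1 - 1/\<beta>) / (4 * zeta_sum \<beta>) * ln (real (M*C)) / real T powr (1 - 1/\<beta>)
      \<le> loss \<beta> M C \<alpha> E Et (gd (loss \<beta> M C \<alpha> E Et) \<eta> (\<lambda>_ _. 0) T) - Lstar \<alpha> (M*C)"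
proof -
  have "M * 1 \<le> M * C" using C by (intro mult_le_mono2) simp
  then have "0 \<le> ln (real (M*C))" using M by (intro ln_ge_zero) linarith
  then have "(1 - \<alpha>) * a powr (1 - 1/\<beta>) / (4 * zeta_sum \<beta>) * ln (real (M*C)) / real T powr (1 - 1/\<beta>)
      = (1 - \<alpha>) / (4 * zeta_sum \<beta>) * ln (real (M*C)) * (a powr (1 - 1/\<beta>) / real T powr (1 - 1/\<beta>))"
    by simp
  also have "\<dots> \<le> (1 - \<alpha>) / (4 * zeta_sum \<beta>) * ln (real (M*C)) * real M powr (1 - \<beta>)"
    using \<beta> \<alpha> M T zeta_sum_ge_1[of \<beta>] \<open>0 \<le> ln (real (M*C))\<close>
    by (intro mult_left_mono powr_ratio_le_of_mult_powr_le) auto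
  also have "\<dots> \<le> loss \<beta> M C \<alpha> E Et (gd (loss \<beta> M C \<alpha> E Et) \<eta> (\<lambda>_ _. 0) T) - Lstar \<alpha> (M*C)"
    by (rule power_law_gd_excess_loss_ge[OF \<beta> \<alpha> M C E Et \<eta> T(3) ln_K])
  finally show ?thesis .
qed

theorem theorem5p7:
  fixes \<beta> \<alpha> c\<^sub>\<eta> a b :: real
  assumes "\<beta> > 1" and "0 < \<alpha>" and "\<alpha> < 1" and "c\<^sub>\<eta> > 0" and "0 < a" and "a \<le> b"
  shows "\<exists>c>0. \<exists>N::nat. \<exists>\<delta>>0. \<forall>M C E Et \<eta> (T::nat).
           N \<le> M \<and> real M \<le> \<delta> * real C
         \<and> orthonormal_cols (M*C) E \<and> orthonormal_cols (M*C) Et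
         \<and> \<eta> > 0 \<and> \<eta> * pitem \<beta> M C 0 \<le> c\<^sub>\<eta>
         \<and> a * real M powr \<beta> \<le> real T \<and> real T \<le> b * real M powr \<beta>
         \<longrightarrow> loss \<beta> M C \<alpha> E Et (gd (loss \<beta> M C \<alpha> E Et) \<eta> (\<lambda>_ _. 0) T) - Lstar \<alpha> (M*C)
             \<ge> c * ln (real (M*C)) / real T powr (1 - 1/\<beta>)"
proof -
  define L where "L = 2 * (1 / (1 - \<alpha>) + ln 2 - ln (1 - \<alpha>) + 2 * c\<^sub>\<eta> * b * 2 powr \<beta>)"
  define N where "N = max 2 (nat \<lceil>exp L\<rceil>)"
  define c where "c = (1 - \<alpha>) * a powr (1 - 1/\<beta>) / (4 * zeta_sum \<beta>)"
  have "c > 0" using assms zeta_sum_ge_1[of \<beta>] by (simp add: c_def)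
  \<comment> \<open>Any \<open>\<delta>\<close> works: the hypothesis \<open>M \<le> \<delta> C\<close> is only needed for \<open>C > 0\<close>.\<close>
  moreover have "c * ln (real (M*C)) / real T powr (1 - 1/\<beta>)
      \<le> loss \<beta> M C \<alpha> E Et (gd (loss \<beta> M C \<alpha> E Et) \<eta> (\<lambda>_ _. 0) T) - Lstar \<alpha> (M*C)"
    if "N \<le> M" "real M \<le> 1 * real C" "orthonormal_cols (M*C) E" "orthonormal_cols (M*C) Et"
      "\<eta> > 0" "\<eta> * pitem \<beta> M C 0 \<le> c\<^sub>\<eta>" "a * real M powr \<beta> \<le> real T" "real T \<le> b * real M powr \<beta>"
    for M C E Et \<eta> T
  proof -
    have M: "M \<ge> 2" "exp L \<le> real M" and C: "C > 0" using that(1,2) by (auto simp: N_def)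
    have "real M \<le> real (M*C)" using C by (intro of_nat_mono) simp
    then have "exp L \<le> real (M*C)" using M by linarith
    then have "L \<le> ln (real (M*C))" using M C by (subst ln_ge_iff) auto
    then show ?thesis
      unfolding c_def L_def using assms that M C by (intro power_law_gd_excess_loss_ge_time) auto
  qed
  ultimately show ?thesis
    by (intro exI[of _ c] conjI exI[of _ N] exI[of _ "1::real"] allI impI) auto
qed

end
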